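(* If $\mathcal{O}$ is a D-cube, then the L-graph $\mathcal{L}_{\mathcal{O}}(\emptyset)$ is acyclic.
   Context: For sets $U,V$ let $U\oplus V=(U\cup V)\setminus(U\cap V)$. An $n$-cube orientation is a directed graph $\mathcal{O}$ on the vertex set of all subsets of $[n]$ containing, for each vertex $V$ and $i\in[n]$, exactly one of the directed edges $(V,V\oplus\{i\})$, $(V\oplus\{i\},V)$; its outmap is $\phi(V)=\{i: (V,V\oplus\{i\})\in\mathcal{O}\}$. For a vertex $V$, the L-graph $\mathcal{L}_{\mathcal{O}}(V)$ has vertex set $[n]\setminus V$ and an arc $(i,j)$ for distinct $i,j\notin V$ whenever $j\in\phi(V)\oplus\phi(V\cup\{i\})$; in particular $\mathcal{L}_{\mathcal{O}}(\emptyset)$ has vertex set $[n]$. Given $M\in\mathbb{R}^{n\times n}$ and $V\subseteq[n]$, let $M(V)$ be the matrix whose $i$-th column is $-M_i$ if $i\in V$ and the $i$-th unit vector if $i\notin V$. A D-cube is an $n$-cube orientation with outmap $\phi(V)=\{i\in[n]: (M(V)^{-1}\mathbf{q})_i<0\}$, where $M$ is symmetric positive definite and $\mathbf{q}\in\mathbb{R}^n$ is generic, i.e. no entry of $M(V)^{-1}\mathbf{q}$ is zero for any $V\subseteq[n]$. (Such an orientation is a unique sink orientation.) *)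

theory Defs
  imports "HOL-Analysis.Analysis"
begin

text \<open>The ground set [n] is modelled by a finite type 'n; vertices of the cube are sets of type 'n set.\<close>

definition symdiff :: "'a set \<Rightarrow> 'a set \<Rightarrow> 'a set" (infixl "\<oplus>\<^sub>s" 65) where
  "U \<oplus>\<^sub>s V = (U \<union> V) - (U \<inter> V)"

definition cube_orientation :: "('n::finite set \<times> 'n set) set \<Rightarrow> bool" where
  "cube_orientation Or \<longleftrightarrow>
     (\<forall>V i. ((V, V \<oplus>\<^sub>s {i}) \<in> Or) \<noteq> ((V \<oplus>\<^sub>s {i}, V) \<in> Or)) \<and>
     (\<forall>(U, W) \<in> Or. \<exists>i. W = U \<oplus>\<^sub>s {i})"

definition outmap :: "('n::finite set \<times> 'n set) set \<Rightarrow> 'n set \<Rightarrow> 'n set" where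
  "outmap Or V = {i. (V, V \<oplus>\<^sub>s {i}) \<in> Or}"

definition L_graph :: "('n::finite set \<times> 'n set) set \<Rightarrow> 'n set \<Rightarrow> ('n \<times> 'n) set" where
  "L_graph Or V = {(i, j). i \<notin> V \<and> j \<notin> V \<and> i \<noteq> j \<and>
                          j \<in> outmap Or V \<oplus>\<^sub>s outmap Or (V \<union> {i})}"

text \<open>M(V): column i is -M_i if i in V, else the i-th unit vector (A $ r $ c = row r, column c).\<close>
definition MV :: "real^'n^'n \<Rightarrow> 'n::finite set \<Rightarrow> real^'n^'n" where
  "MV M V = (\<chi> r c. if c \<in> V then - (M $ r $ c) else (if r = c then 1 else 0))"

definition sym_pos_def :: "real^'n::finite^'n \<Rightarrow> bool" where
  "sym_pos_def M \<longleftrightarrow> transpose M = M \<and> (\<forall>x. x \<noteq> 0 \<longrightarrow> x \<bullet> (M *v x) > 0)"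

definition generic_q :: "real^'n::finite^'n \<Rightarrow> real^'n \<Rightarrow> bool" where
  "generic_q M q \<longleftrightarrow> (\<forall>V i. (matrix_inv (MV M V) *v q) $ i \<noteq> 0)"

definition D_cube :: "('n::finite set \<times> 'n set) set \<Rightarrow> bool" where
  "D_cube Or \<longleftrightarrow> cube_orientation Or \<and>
     (\<exists>M q. sym_pos_def M \<and> generic_q M q \<and>
        (\<forall>V. outmap Or V = {i. (matrix_inv (MV M V) *v q) $ i < 0}))"

end

theory Submission
  imports Defs
begin

text \<open>The potential \<open>k \<mapsto> q\<^sub>k\<^sup>2 / M\<^sub>k\<^sub>k\<close> strictly decreases along every arc of
  \<open>L(\<emptyset>)\<close>. Since \<open>M(\<emptyset>) = I\<close>, the outmap at \<open>\<emptyset>\<close> records the signs of \<open>q\<close>, and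
  \<open>M({i})\<^sup>-\<^sup>1 q\<close> arises from \<open>q\<close> by a single pivot on \<open>M\<^sub>i\<^sub>i\<close>, so its \<open>j\<close>-th entry is
  \<open>q\<^sub>j - M\<^sub>j\<^sub>i q\<^sub>i / M\<^sub>i\<^sub>i\<close>. An arc \<open>(i, j)\<close> says that these two entries differ in sign,
  which forces \<open>|q\<^sub>j| < |M\<^sub>j\<^sub>i q\<^sub>i| / M\<^sub>i\<^sub>i\<close>; positivity of the \<open>2 \<times> 2\<close> principal minor,
  \<open>M\<^sub>i\<^sub>j\<^sup>2 < M\<^sub>i\<^sub>i M\<^sub>j\<^sub>j\<close>, then gives \<open>q\<^sub>j\<^sup>2 / M\<^sub>j\<^sub>j < q\<^sub>i\<^sup>2 / M\<^sub>i\<^sub>i\<close>.\<close>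

lemma matrix_inv_mult_vec_eq:
  fixes A :: "'a::field^'n^'n"
  assumes "invertible A" and "A *v x = q"
  shows "matrix_inv A *v q = x"
proof -
  have "matrix_inv A ** A = mat 1"
    using assms(1) unfolding invertible_def matrix_inv_def by (rule someI2_ex) auto
  then show ?thesis
    using assms(2) by (metis matrix_vector_mul_assoc matrix_vector_mul_lid)
qed

lemma MV_empty: "MV M {} = mat 1"
  unfolding MV_def mat_def by (simp add: vec_eq_iff)

lemma MV_singleton_mult_vec:
  "(MV M {i} *v x) $ r = (if r = i then 0 else x $ r) - M $ r $ i * x $ i"
proof -
  have "(MV M {i} *v x) $ r
      = (\<Sum>c\<in>UNIV. (if c = r \<and> r \<noteq> i then x $ r else 0) - (if c = i then M $ r $ i * x $ i else 0))"
    unfolding matrix_vector_mult_def MV_def by (auto intro: sum.cong)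
  then show ?thesis
    by (simp add: sum_subtractf)
qed

definition pivot_vec :: "real^'n^'n \<Rightarrow> 'n::finite \<Rightarrow> real^'n \<Rightarrow> real^'n" where
  "pivot_vec M i q = (\<chi> r. if r = i then - q $ i / M $ i $ i else q $ r - M $ r $ i * q $ i / M $ i $ i)"

lemma matrix_inv_MV_singleton:
  assumes "M $ i $ i \<noteq> 0"
  shows "matrix_inv (MV M {i}) *v q = pivot_vec M i q"
proof (rule matrix_inv_mult_vec_eq)
  show "invertible (MV M {i})"
    unfolding invertible_left_inverse matrix_left_invertible_ker
  proof (intro allI impI)
    fix y assume y: "MV M {i} *v y = 0"
    have "y $ i = 0"
      using arg_cong[OF y, of "\<lambda>v. v $ i"] assms by (simp add: MV_singleton_mult_vec)
    then show "y = 0"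
      using y by (auto simp: vec_eq_iff MV_singleton_mult_vec split: if_splits)
  qed
  show "MV M {i} *v pivot_vec M i q = q"
    using assms by (simp add: vec_eq_iff MV_singleton_mult_vec pivot_vec_def)
qed

lemma inner_axis_mult_axis:
  fixes M :: "real^'n^'m"
  shows "axis k 1 \<bullet> (M *v axis l 1) = M $ k $ l"
  by (simp add: matrix_vector_mult_basis inner_axis' column_def)

lemma quadratic_form_axis_pair:
  fixes M :: "real^'n::finite^'n"
  shows "(a *\<^sub>R axis i 1 + b *\<^sub>R axis j 1) \<bullet> (M *v (a *\<^sub>R axis i 1 + b *\<^sub>R axis j 1))
    = a\<^sup>2 * M $ i $ i + a * b * (M $ i $ j + M $ j $ i) + b\<^sup>2 * M $ j $ j"
  by (simp add: matrix_vector_right_distrib matrix_vector_mult_scaleR inner_add_left inner_add_right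
      inner_axis_mult_axis power2_eq_square distrib_left)

lemma sym_pos_def_symmetric: "sym_pos_def M \<Longrightarrow> M $ i $ j = M $ j $ i"
  unfolding sym_pos_def_def by (metis transpose_def vec_lambda_beta)

lemma sym_pos_def_diag_pos:
  fixes M :: "real^'n::finite^'n"
  assumes "sym_pos_def M"
  shows "0 < M $ i $ i"
proof -
  have "axis i 1 \<noteq> (0::real^'n)"
    by simp
  then show ?thesis
    using assms unfolding sym_pos_def_def by (metis inner_axis_mult_axis)
qed

lemma sym_pos_def_offdiag_sq_less:
  assumes "sym_pos_def M" and "i \<noteq> j"
  shows "(M $ i $ j)\<^sup>2 < M $ i $ i * M $ j $ j"
proof -
  define x where "x = M $ j $ j *\<^sub>R axis i 1 + (- M $ i $ j) *\<^sub>R axis j (1::real)"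
  have Mjj: "0 < M $ j $ j"
    using assms(1) by (rule sym_pos_def_diag_pos)
  have "x $ i \<noteq> 0"
    using Mjj assms(2) by (simp add: x_def axis_def)
  then have "0 < x \<bullet> (M *v x)"
    using assms(1) unfolding sym_pos_def_def by (metis zero_index)
  also have "\<dots> = M $ j $ j * (M $ i $ i * M $ j $ j - (M $ i $ j)\<^sup>2)"
    unfolding x_def quadratic_form_axis_pair sym_pos_def_symmetric[OF assms(1), of j i]
    by (simp add: algebra_simps power2_eq_square)
  finally show ?thesis
    using Mjj by (simp add: zero_less_mult_iff)
qed

lemma sq_less_sq_if_sign_change:
  fixes a c :: real
  assumes "a - c \<noteq> 0" and "(a < 0) \<noteq> (a - c < 0)"
  shows "a\<^sup>2 < c\<^sup>2"
proof -
  have "\<bar>a\<bar> < \<bar>c\<bar>"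
    using assms by auto
  then show ?thesis
    by (meson abs_le_square_iff not_le)
qed

lemma pivot_sign_change_potential_less:
  assumes "sym_pos_def M" and "i \<noteq> j"
    and "pivot_vec M i q $ j \<noteq> 0" and "(q $ j < 0) \<noteq> (pivot_vec M i q $ j < 0)"
  shows "(q $ j)\<^sup>2 / M $ j $ j < (q $ i)\<^sup>2 / M $ i $ i"
proof -
  have Mii: "0 < M $ i $ i" and Mjj: "0 < M $ j $ j"
    using assms(1) by (simp_all add: sym_pos_def_diag_pos)
  have "pivot_vec M i q $ j = q $ j - M $ j $ i * q $ i / M $ i $ i"
    using assms(2) by (simp add: pivot_vec_def)
  then have "(q $ j)\<^sup>2 < (M $ j $ i * q $ i / M $ i $ i)\<^sup>2"
    using assms(3,4) by (intro sq_less_sq_if_sign_change) auto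
  then have "(q $ j)\<^sup>2 * (M $ i $ i)\<^sup>2 < (M $ i $ j)\<^sup>2 * (q $ i)\<^sup>2"
    using Mii sym_pos_def_symmetric[OF assms(1), of j i] by (simp add: field_simps)
  also have "\<dots> \<le> M $ i $ i * M $ j $ j * (q $ i)\<^sup>2"
    using sym_pos_def_offdiag_sq_less[OF assms(1,2)] by (intro mult_right_mono) simp_all
  finally have "M $ i $ i * ((q $ j)\<^sup>2 * M $ i $ i) < M $ i $ i * (M $ j $ j * (q $ i)\<^sup>2)"
    by (simp add: power2_eq_square ac_simps)
  then have "(q $ j)\<^sup>2 * M $ i $ i < M $ j $ j * (q $ i)\<^sup>2"
    using Mii by simp
  then show ?thesis
    using Mii Mjj by (simp add: divide_simps ac_simps)
qed

theorem lemma5p3: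
  fixes Or :: "('n::finite set \<times> 'n set) set"
  assumes "D_cube Or"
  shows "acyclic (L_graph Or {})"
proof -
  obtain M q where pd: "sym_pos_def M" and gen: "generic_q M q"
    and om: "\<And>V. outmap Or V = {i. (matrix_inv (MV M V) *v q) $ i < 0}"
    using assms unfolding D_cube_def by blast
  show ?thesis
  proof (rule acyclicI_order[where f = "\<lambda>k. (q $ k)\<^sup>2 / M $ k $ k"])
    fix i j assume "(i, j) \<in> L_graph Or {}"
    then have ij: "i \<noteq> j" and flip: "j \<in> outmap Or {} \<oplus>\<^sub>s outmap Or {i}"
      unfolding L_graph_def by auto
    have q: "matrix_inv (MV M {}) *v q = q"
      unfolding MV_empty by (rule matrix_inv_mult_vec_eq) (simp_all add: invertible_def)
    have pivot: "matrix_inv (MV M {i}) *v q = pivot_vec M i q"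
      using pd by (simp add: matrix_inv_MV_singleton sym_pos_def_diag_pos less_imp_neq[symmetric])
    show "(q $ j)\<^sup>2 / M $ j $ j < (q $ i)\<^sup>2 / M $ i $ i"
    proof (rule pivot_sign_change_potential_less[OF pd ij])
      show "pivot_vec M i q $ j \<noteq> 0"
        using gen pivot unfolding generic_q_def by metis
      show "(q $ j < 0) \<noteq> (pivot_vec M i q $ j < 0)"
        using flip unfolding om q pivot symdiff_def by auto
    qed
  qed
qed

end
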